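(* For any finite abelian group $G$ and positive integer $n$, the monoid $I_n(\hat G)$ is left inductive and right inductive.
   Context: $\hat G=G\sqcup\{0\}$ with $0$ absorbing. $I_n(\hat G)$ is the monoid of $n\times n$ matrices with entries in $\hat G$ having at most one nonzero entry in each row and each column, under matrix multiplication; it is a $\hat G$-linear monoid with $G$ embedded as scalar matrices. $\mathrm{Vect}_{\hat G}$: objects are finite pointed sets with an action of $\hat G$ ($0v=0$, $g0=0$) such that $G$ acts freely on nonzero elements; morphisms $f$ satisfy $f(0)=0$, $f(gv)=gf(v)$, $f(v_1)=f(v_2)\neq0\Rightarrow Gv_1=Gv_2$. For a monoid $M$ with zero and $a\in M$: $J(a)=MaM$, $I(a)=\{x\in J(a):MxM\neq J(a)\}$, $P(a)=(J(a)\setminus I(a))\cup\{0\}$. $M$ acts on $P(a)$ by left translation ($m\cdot x=mx$ if $mx\in J(a)\setminus I(a)$, else $0$) and on the right by right translation analogously. $M$ is left (resp. right) inductive if for every idempotent $e\in M$, each left (resp. right) translation by an element of $M$ is a morphism of $\mathrm{Vect}_{\hat G}$ on $P(e)$ (so that $P(e)$ is a $\hat G$-linear representation of $M$, resp. of $M^{\mathrm{op}}$, with $0$ acting as zero and $G$ as scalars). *)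

theory Defs
  imports "HOL-Algebra.Group"
begin

definition J_ideal :: "'m set \<Rightarrow> ('m \<Rightarrow> 'm \<Rightarrow> 'm) \<Rightarrow> 'm \<Rightarrow> 'm set" where
  "J_ideal M mul a = {mul (mul x a) y | x y. x \<in> M \<and> y \<in> M}"

definition I_ideal :: "'m set \<Rightarrow> ('m \<Rightarrow> 'm \<Rightarrow> 'm) \<Rightarrow> 'm \<Rightarrow> 'm set" where
  "I_ideal M mul a = {x \<in> J_ideal M mul a. J_ideal M mul x \<noteq> J_ideal M mul a}"

definition P_set :: "'m set \<Rightarrow> ('m \<Rightarrow> 'm \<Rightarrow> 'm) \<Rightarrow> 'm \<Rightarrow> 'm \<Rightarrow> 'm set" where
  "P_set M mul z a = (J_ideal M mul a - I_ideal M mul a) \<union> {z}"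

definition lact :: "'m set \<Rightarrow> ('m \<Rightarrow> 'm \<Rightarrow> 'm) \<Rightarrow> 'm \<Rightarrow> 'm \<Rightarrow> 'm \<Rightarrow> 'm \<Rightarrow> 'm" where
  "lact M mul z a m x = (if mul m x \<in> J_ideal M mul a - I_ideal M mul a then mul m x else z)"

definition ract :: "'m set \<Rightarrow> ('m \<Rightarrow> 'm \<Rightarrow> 'm) \<Rightarrow> 'm \<Rightarrow> 'm \<Rightarrow> 'm \<Rightarrow> 'm \<Rightarrow> 'm" where
  "ract M mul z a m x = (if mul x m \<in> J_ideal M mul a - I_ideal M mul a then mul x m else z)"

text \<open>An object: a finite pointed set (X, z) with an action of G (the element 0 of \<hat>G acts
  as the constant map to z), fixing z, with G acting freely on nonzero elements.\<close>
definition vect_obj :: "('g, 'b) monoid_scheme \<Rightarrow> 'x set \<Rightarrow> 'x \<Rightarrow> ('g \<Rightarrow> 'x \<Rightarrow> 'x) \<Rightarrow> bool" where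
  "vect_obj G X z act \<longleftrightarrow>
     finite X \<and> z \<in> X \<and>
     (\<forall>g\<in>carrier G. \<forall>v\<in>X. act g v \<in> X) \<and>
     (\<forall>v\<in>X. act \<one>\<^bsub>G\<^esub> v = v) \<and>
     (\<forall>g\<in>carrier G. \<forall>h\<in>carrier G. \<forall>v\<in>X. act (g \<otimes>\<^bsub>G\<^esub> h) v = act g (act h v)) \<and>
     (\<forall>g\<in>carrier G. act g z = z) \<and>
     (\<forall>g\<in>carrier G. \<forall>v\<in>X - {z}. act g v = v \<longrightarrow> g = \<one>\<^bsub>G\<^esub>)"

definition vect_mor :: "('g, 'b) monoid_scheme \<Rightarrow> 'x set \<Rightarrow> 'x \<Rightarrow> ('g \<Rightarrow> 'x \<Rightarrow> 'x)
     \<Rightarrow> 'y set \<Rightarrow> 'y \<Rightarrow> ('g \<Rightarrow> 'y \<Rightarrow> 'y) \<Rightarrow> ('x \<Rightarrow> 'y) \<Rightarrow> bool" where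
  "vect_mor G X z act Y z' act' f \<longleftrightarrow>
     (\<forall>v\<in>X. f v \<in> Y) \<and> f z = z' \<and>
     (\<forall>g\<in>carrier G. \<forall>v\<in>X. f (act g v) = act' g (f v)) \<and>
     (\<forall>v1\<in>X. \<forall>v2\<in>X. f v1 = f v2 \<and> f v1 \<noteq> z' \<longrightarrow>
        {act g v1 | g. g \<in> carrier G} = {act g v2 | g. g \<in> carrier G})"

text \<open>Matrices indexed by 0..n-1; None is the zero of \<hat>G, Some g an element g of G.\<close>
type_synonym 'g gmat = "nat \<Rightarrow> nat \<Rightarrow> 'g option"

definition In_mats :: "('g, 'b) monoid_scheme \<Rightarrow> nat \<Rightarrow> 'g gmat set" where
  "In_mats G n = {A. (\<forall>i j. A i j \<noteq> None \<longrightarrow> i < n \<and> j < n \<and> the (A i j) \<in> carrier G) \<and>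
      (\<forall>i j k. A i j \<noteq> None \<longrightarrow> A i k \<noteq> None \<longrightarrow> j = k) \<and>
      (\<forall>i j k. A i j \<noteq> None \<longrightarrow> A k j \<noteq> None \<longrightarrow> i = k)}"

text \<open>Matrix product: (AB)_{ij} is the unique nonzero product A_{ik} B_{kj} if it exists, else 0.\<close>
definition mat_mul :: "('g, 'b) monoid_scheme \<Rightarrow> 'g gmat \<Rightarrow> 'g gmat \<Rightarrow> 'g gmat" where
  "mat_mul G A B = (\<lambda>i j.
     if \<exists>k. A i k \<noteq> None \<and> B k j \<noteq> None
     then (let k = (SOME k. A i k \<noteq> None \<and> B k j \<noteq> None)
           in Some (the (A i k) \<otimes>\<^bsub>G\<^esub> the (B k j)))
     else None)"

definition zero_mat :: "'g gmat" where
  "zero_mat = (\<lambda>i j. None)"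

definition scalar_mat :: "nat \<Rightarrow> 'g \<Rightarrow> 'g gmat" where
  "scalar_mat n g = (\<lambda>i j. if i < n \<and> i = j then Some g else None)"

definition left_inductive :: "('g, 'b) monoid_scheme \<Rightarrow> nat \<Rightarrow> bool" where
  "left_inductive G n \<longleftrightarrow>
    (\<forall>e\<in>In_mats G n. mat_mul G e e = e \<longrightarrow>
      (let M = In_mats G n; mul = mat_mul G; z = zero_mat;
           X = P_set M mul z e;
           act = (\<lambda>g v. lact M mul z e (scalar_mat n g) v)
       in vect_obj G X z act \<and>
          (\<forall>m\<in>M. vect_mor G X z act X z act (lact M mul z e m))))"

definition right_inductive :: "('g, 'b) monoid_scheme \<Rightarrow> nat \<Rightarrow> bool" where
  "right_inductive G n \<longleftrightarrow>
    (\<forall>e\<in>In_mats G n. mat_mul G e e = e \<longrightarrow>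
      (let M = In_mats G n; mul = mat_mul G; z = zero_mat;
           X = P_set M mul z e;
           act = (\<lambda>g v. ract M mul z e (scalar_mat n g) v)
       in vect_obj G X z act \<and>
          (\<forall>m\<in>M. vect_mor G X z act X z act (ract M mul z e m))))"

end

theory Submission
  imports Defs
begin

(* Elements of I_n(\<hat>G) are partial monomial matrices. Their rank, the number of nonzero
   entries, cannot increase under multiplication on either side, so it is constant on a
   J-class. Scalar matrices are central and G acts freely on nonzero matrices through them,
   which makes P(e) an object of Vect. If m v1 = m v2 lies in the J-class of v1 and v2, then
   left multiplication by m preserves their rank; this forces every nonzero row of v1 and v2
   to meet a nonzero column of m, and then m can be cancelled, so v1 = v2. Right translations
   are left translations of the opposite monoid, which has the same properties. *)

locale rank_cancellative_monoid = group G for G :: "('g, 'b) monoid_scheme" (structure) +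
  fixes M :: "'m set" and mul :: "'m \<Rightarrow> 'm \<Rightarrow> 'm" and z :: 'm
    and s :: "'g \<Rightarrow> 'm" and r :: "'m \<Rightarrow> nat"
  assumes finite_M: "finite M"
    and mul_closed: "\<lbrakk>x \<in> M; y \<in> M\<rbrakk> \<Longrightarrow> mul x y \<in> M"
    and mul_assoc: "\<lbrakk>x \<in> M; y \<in> M; w \<in> M\<rbrakk> \<Longrightarrow> mul (mul x y) w = mul x (mul y w)"
    and zero_in: "z \<in> M"
    and mul_zero_left: "x \<in> M \<Longrightarrow> mul z x = z"
    and mul_zero_right: "x \<in> M \<Longrightarrow> mul x z = z"
    and scalar_in: "g \<in> carrier G \<Longrightarrow> s g \<in> M"
    and scalar_one_mul: "x \<in> M \<Longrightarrow> mul (s \<one>) x = x"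
    and scalar_mult: "\<lbrakk>g \<in> carrier G; h \<in> carrier G\<rbrakk> \<Longrightarrow> s (g \<otimes> h) = mul (s g) (s h)"
    and scalar_central: "\<lbrakk>g \<in> carrier G; x \<in> M\<rbrakk> \<Longrightarrow> mul (s g) x = mul x (s g)"
    and scalar_free: "\<lbrakk>g \<in> carrier G; x \<in> M; x \<noteq> z; mul (s g) x = x\<rbrakk> \<Longrightarrow> g = \<one>"
    and rank_mul_le_left: "\<lbrakk>x \<in> M; y \<in> M\<rbrakk> \<Longrightarrow> r (mul x y) \<le> r x"
    and rank_mul_le_right: "\<lbrakk>x \<in> M; y \<in> M\<rbrakk> \<Longrightarrow> r (mul x y) \<le> r y"
    and rank_preserving_left_cancel:
      "\<lbrakk>m \<in> M; v1 \<in> M; v2 \<in> M; r (mul m v1) = r v1; r (mul m v2) = r v2;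
        mul m v1 = mul m v2\<rbrakk> \<Longrightarrow> v1 = v2"
    and rank_preserving_right_cancel:
      "\<lbrakk>m \<in> M; v1 \<in> M; v2 \<in> M; r (mul v1 m) = r v1; r (mul v2 m) = r v2;
        mul v1 m = mul v2 m\<rbrakk> \<Longrightarrow> v1 = v2"
begin

definition J_class :: "'m \<Rightarrow> 'm set" where
  "J_class a = {x \<in> M. J_ideal M mul x = J_ideal M mul a}"

lemma J_classD: "x \<in> J_class a \<Longrightarrow> x \<in> M"
  unfolding J_class_def by blast

lemma mul_scalar_one: "x \<in> M \<Longrightarrow> mul x (s \<one>) = x"
  using scalar_central scalar_one_mul one_closed by metis

lemma J_ideal_subset: "a \<in> M \<Longrightarrow> J_ideal M mul a \<subseteq> M"
  by (auto simp: J_ideal_def intro: mul_closed)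

lemma mul_in_J_ideal: "\<lbrakk>x \<in> M; a \<in> M; y \<in> M\<rbrakk> \<Longrightarrow> mul (mul x a) y \<in> J_ideal M mul a"
  by (auto simp: J_ideal_def)

lemma self_in_J_ideal: "a \<in> M \<Longrightarrow> a \<in> J_ideal M mul a"
  using mul_in_J_ideal[of "s \<one>" a "s \<one>"] scalar_in scalar_one_mul mul_scalar_one
    one_closed by metis

lemma J_ideal_mono:
  assumes a: "a \<in> M" and b: "b \<in> J_ideal M mul a"
  shows "J_ideal M mul b \<subseteq> J_ideal M mul a"
proof
  fix c assume "c \<in> J_ideal M mul b"
  then obtain u w where c: "c = mul (mul u b) w" "u \<in> M" "w \<in> M" by (auto simp: J_ideal_def)
  obtain x y where b': "b = mul (mul x a) y" "x \<in> M" "y \<in> M" using b by (auto simp: J_ideal_def)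
  have "c = mul (mul (mul u x) a) (mul y w)"
    using c b' a by (simp add: mul_assoc mul_closed)
  then show "c \<in> J_ideal M mul a"
    using c b' a by (simp add: mul_in_J_ideal mul_closed)
qed

lemma J_ideal_scalar_mul:
  assumes g: "g \<in> carrier G" and x: "x \<in> M"
  shows "J_ideal M mul (mul (s g) x) = J_ideal M mul x"
proof
  have "mul (s g) x \<in> J_ideal M mul x"
    using mul_in_J_ideal[of "s g" x "s \<one>"] g x scalar_in mul_scalar_one mul_closed by simp
  then show "J_ideal M mul (mul (s g) x) \<subseteq> J_ideal M mul x"
    using J_ideal_mono x by blast
  have "mul (s (inv g)) (mul (s g) x) = mul (mul (s (inv g)) (s g)) x"
    using g x by (simp add: mul_assoc scalar_in)
  also have "\<dots> = x"
    using g x by (simp add: scalar_one_mul flip: scalar_mult)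
  finally have "x = mul (s (inv g)) (mul (s g) x)" ..
  then have "x \<in> J_ideal M mul (mul (s g) x)"
    using mul_in_J_ideal[of "s (inv g)" "mul (s g) x" "s \<one>"] g x scalar_in mul_scalar_one mul_closed
    by simp
  then show "J_ideal M mul x \<subseteq> J_ideal M mul (mul (s g) x)"
    using J_ideal_mono g x scalar_in mul_closed by blast
qed

lemma rank_J_ideal_le:
  assumes a: "a \<in> M" and b: "b \<in> J_ideal M mul a"
  shows "r b \<le> r a"
proof -
  obtain x y where b': "b = mul (mul x a) y" "x \<in> M" "y \<in> M" using b by (auto simp: J_ideal_def)
  then have "r b \<le> r (mul x a)" using a by (simp add: rank_mul_le_left mul_closed)
  also have "\<dots> \<le> r a" using b' a by (simp add: rank_mul_le_right)
  finally show ?thesis .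
qed

lemma rank_J_class:
  assumes a: "a \<in> M" and x: "x \<in> J_class a"
  shows "r x = r a"
proof -
  have "x \<in> M" and J: "J_ideal M mul x = J_ideal M mul a" using x by (auto simp: J_class_def)
  then have "x \<in> J_ideal M mul a" and "a \<in> J_ideal M mul x" using a self_in_J_ideal by auto
  then show ?thesis using a \<open>x \<in> M\<close> rank_J_ideal_le by (simp add: le_antisym)
qed

lemma P_set_eq: "a \<in> M \<Longrightarrow> P_set M mul z a = insert z (J_class a)"
  unfolding P_set_def I_ideal_def J_class_def using J_ideal_subset self_in_J_ideal by blast

lemma lact_eq: "a \<in> M \<Longrightarrow> lact M mul z a m v = (if mul m v \<in> J_class a then mul m v else z)"
  unfolding lact_def I_ideal_def J_class_def using J_ideal_subset self_in_J_ideal by auto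

lemma scalar_mul_in_J_class_iff:
  "\<lbrakk>g \<in> carrier G; x \<in> M\<rbrakk> \<Longrightarrow> mul (s g) x \<in> J_class a \<longleftrightarrow> x \<in> J_class a"
  unfolding J_class_def by (simp add: J_ideal_scalar_mul scalar_in mul_closed)

lemma lact_scalar_zero: "\<lbrakk>e \<in> M; g \<in> carrier G\<rbrakk> \<Longrightarrow> lact M mul z e (s g) z = z"
  by (simp add: lact_eq mul_zero_right scalar_in)

lemma lact_scalar_J_class:
  assumes "e \<in> M" "g \<in> carrier G" "v \<in> J_class e"
  shows "lact M mul z e (s g) v = mul (s g) v" and "mul (s g) v \<in> J_class e"
  using assms by (auto simp: lact_eq scalar_mul_in_J_class_iff J_classD)

lemma vect_obj_lact:
  assumes e: "e \<in> M"
  shows "vect_obj G (P_set M mul z e) z (\<lambda>g. lact M mul z e (s g))"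
proof -
  note act_zero = lact_scalar_zero[OF e] and act_J_class = lact_scalar_J_class[OF e]
  show ?thesis
    unfolding vect_obj_def P_set_eq[OF e]
  proof (intro conjI ballI impI)
    show "finite (insert z (J_class e))"
      using finite_subset[OF _ finite_M] J_classD by blast
    show "z \<in> insert z (J_class e)" by simp
    show "lact M mul z e (s g) v \<in> insert z (J_class e)" for g v
      using e by (simp add: lact_eq)
    show "lact M mul z e (s \<one>) v = v" if "v \<in> insert z (J_class e)" for v
      using that act_zero act_J_class J_classD scalar_one_mul by auto
    show "lact M mul z e (s (g \<otimes> h)) v = lact M mul z e (s g) (lact M mul z e (s h) v)"
      if "g \<in> carrier G" "h \<in> carrier G" "v \<in> insert z (J_class e)" for g h v
    proof (cases "v = z")
      case False
      then have v: "v \<in> J_class e" using that(3) by simp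
      have "mul (s (g \<otimes> h)) v = mul (s g) (mul (s h) v)"
        using that(1,2) J_classD[OF v] by (simp add: scalar_mult mul_assoc scalar_in)
      then show ?thesis using that(1,2) v act_J_class by simp
    qed (use that act_zero in simp)
    show "lact M mul z e (s g) z = z" if "g \<in> carrier G" for g
      using that by (rule act_zero)
    show "g = \<one>" if "g \<in> carrier G" "v \<in> insert z (J_class e) - {z}"
      and "lact M mul z e (s g) v = v" for g v
      using that act_J_class J_classD scalar_free by (metis DiffE insertE singletonI)
  qed
qed

lemma vect_mor_lact:
  assumes e: "e \<in> M" and m: "m \<in> M"
  shows "vect_mor G (P_set M mul z e) z (\<lambda>g. lact M mul z e (s g))
                    (P_set M mul z e) z (\<lambda>g. lact M mul z e (s g)) (lact M mul z e m)"
proof -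
  let ?f = "lact M mul z e m" and ?act = "\<lambda>g. lact M mul z e (s g)"
  have f_zero: "?f z = z"
    using e m by (simp add: lact_eq mul_zero_right)
  note act_zero = lact_scalar_zero[OF e]
  have equivariant: "?f (?act g v) = ?act g (?f v)"
    if g: "g \<in> carrier G" and v: "v \<in> J_class e" for g v
  proof -
    have vM: "v \<in> M" using v by (rule J_classD)
    have "mul m (mul (s g) v) = mul (mul m (s g)) v"
      using g m vM by (simp add: mul_assoc scalar_in)
    also have "\<dots> = mul (mul (s g) m) v"
      using g m by (simp add: scalar_central)
    also have "\<dots> = mul (s g) (mul m v)"
      using g m vM by (simp add: mul_assoc scalar_in)
    finally have comm: "mul m (mul (s g) v) = mul (s g) (mul m v)" .
    have "?f (?act g v) = (if mul (s g) (mul m v) \<in> J_class e then mul (s g) (mul m v) else z)"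
      using e g v by (simp add: lact_scalar_J_class lact_eq comm)
    also have "\<dots> = (if mul m v \<in> J_class e then mul (s g) (mul m v) else z)"
      using g m vM by (simp add: scalar_mul_in_J_class_iff mul_closed)
    also have "\<dots> = ?act g (?f v)"
      using e g by (simp add: lact_eq[of e m v] lact_scalar_J_class lact_scalar_zero)
    finally show ?thesis .
  qed
  have injective: "v1 = v2" if "v1 \<in> J_class e" "v2 \<in> J_class e"
    and "mul m v1 \<in> J_class e" "mul m v2 \<in> J_class e" and "mul m v1 = mul m v2" for v1 v2
    by (rule rank_preserving_left_cancel[OF m])
      (use that in \<open>simp_all add: J_classD rank_J_class[OF e]\<close>)
  show ?thesis
    unfolding vect_mor_def P_set_eq[OF e]
  proof (intro conjI ballI impI)
    show "?f v \<in> insert z (J_class e)" for v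
      using e by (simp add: lact_eq)
    show "?f z = z" by (rule f_zero)
    show "?f (?act g v) = ?act g (?f v)" if "g \<in> carrier G" "v \<in> insert z (J_class e)" for g v
      using that equivariant f_zero act_zero by auto
    show "{?act g v1 |g. g \<in> carrier G} = {?act g v2 |g. g \<in> carrier G}"
      if "v1 \<in> insert z (J_class e)" "v2 \<in> insert z (J_class e)" and "?f v1 = ?f v2 \<and> ?f v1 \<noteq> z"
      for v1 v2
    proof -
      have "v1 \<noteq> z" "v2 \<noteq> z" using that f_zero by auto
      then have "v1 \<in> J_class e" "v2 \<in> J_class e" using that by auto
      moreover have "mul m v1 \<in> J_class e" "mul m v2 \<in> J_class e" "mul m v1 = mul m v2"
        using that(3) e by (auto simp: lact_eq split: if_splits)
      ultimately have "v1 = v2" by (rule injective)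
      then show ?thesis by simp
    qed
  qed
qed

lemma rank_cancellative_monoid_opposite: "rank_cancellative_monoid G M (\<lambda>x y. mul y x) z s r"
proof unfold_locales
  show "s (g \<otimes> h) = mul (s h) (s g)" if "g \<in> carrier G" "h \<in> carrier G" for g h
    using that scalar_mult scalar_central scalar_in by metis
  show "g = \<one>" if "g \<in> carrier G" "x \<in> M" "x \<noteq> z" "mul x (s g) = x" for g x
    using that scalar_free scalar_central by metis
qed (simp_all add: finite_M mul_closed mul_assoc zero_in mul_zero_left mul_zero_right scalar_in
       mul_scalar_one scalar_central rank_mul_le_left rank_mul_le_right
       rank_preserving_left_cancel rank_preserving_right_cancel)

lemma J_ideal_opposite: "a \<in> M \<Longrightarrow> J_ideal M (\<lambda>x y. mul y x) a = J_ideal M mul a"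
  unfolding J_ideal_def by (metis mul_assoc)

lemma I_ideal_opposite: "a \<in> M \<Longrightarrow> I_ideal M (\<lambda>x y. mul y x) a = I_ideal M mul a"
proof -
  assume a: "a \<in> M"
  have "J_ideal M (\<lambda>x y. mul y x) x = J_ideal M mul x" if "x \<in> J_ideal M mul a" for x
    using that J_ideal_subset[OF a] J_ideal_opposite by blast
  then show ?thesis
    unfolding I_ideal_def J_ideal_opposite[OF a] by auto
qed

lemma P_set_opposite: "a \<in> M \<Longrightarrow> P_set M (\<lambda>x y. mul y x) z a = P_set M mul z a"
  unfolding P_set_def by (simp add: J_ideal_opposite I_ideal_opposite)

lemma ract_eq_lact_opposite: "a \<in> M \<Longrightarrow> ract M mul z a = lact M (\<lambda>x y. mul y x) z a"
  unfolding ract_def lact_def by (simp add: J_ideal_opposite I_ideal_opposite)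

lemma vect_obj_ract:
  "e \<in> M \<Longrightarrow> vect_obj G (P_set M mul z e) z (\<lambda>g. ract M mul z e (s g))"
  using rank_cancellative_monoid.vect_obj_lact[OF rank_cancellative_monoid_opposite]
  by (simp add: P_set_opposite ract_eq_lact_opposite)

lemma vect_mor_ract:
  "\<lbrakk>e \<in> M; m \<in> M\<rbrakk> \<Longrightarrow>
    vect_mor G (P_set M mul z e) z (\<lambda>g. ract M mul z e (s g))
               (P_set M mul z e) z (\<lambda>g. ract M mul z e (s g)) (ract M mul z e m)"
  using rank_cancellative_monoid.vect_mor_lact[OF rank_cancellative_monoid_opposite]
  by (simp add: P_set_opposite ract_eq_lact_opposite)

end

lemma In_matsD:
  assumes "A \<in> In_mats G n"
  shows "A i j = Some a \<Longrightarrow> i < n \<and> j < n \<and> a \<in> carrier G"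
    and "A i j \<noteq> None \<Longrightarrow> A i k \<noteq> None \<Longrightarrow> j = k"
    and "A i j \<noteq> None \<Longrightarrow> A k j \<noteq> None \<Longrightarrow> i = k"
  using assms unfolding In_mats_def by force+

lemma mat_mul_eq_None_iff:
  "mat_mul G A B i j = None \<longleftrightarrow> (\<forall>k. A i k = None \<or> B k j = None)"
  unfolding mat_mul_def by (auto simp: Let_def)

lemma mat_mul_row_entry:
  assumes A: "A \<in> In_mats G n" and a: "A i k = Some a"
  shows "mat_mul G A B i j = map_option (\<lambda>b. a \<otimes>\<^bsub>G\<^esub> b) (B k j)"
proof -
  have only_k: "k' = k" if "A i k' \<noteq> None" for k'
    using In_matsD(2)[OF A] a that by blast
  show ?thesis
  proof (cases "B k j")
    case None
    then have "mat_mul G A B i j = None"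
      unfolding mat_mul_eq_None_iff using only_k by metis
    then show ?thesis using None by simp
  next
    case (Some b)
    have "(SOME k'. A i k' \<noteq> None \<and> B k' j \<noteq> None) = k"
      using only_k a Some by (intro some_equality) auto
    then show ?thesis using a Some unfolding mat_mul_def by auto
  qed
qed

lemma mat_mul_col_entry:
  assumes B: "B \<in> In_mats G n" and b: "B k j = Some b"
  shows "mat_mul G A B i j = map_option (\<lambda>a. a \<otimes>\<^bsub>G\<^esub> b) (A i k)"
proof -
  have only_k: "k' = k" if "B k' j \<noteq> None" for k'
    using In_matsD(3)[OF B] b that by blast
  show ?thesis
  proof (cases "A i k")
    case None
    then have "mat_mul G A B i j = None"
      unfolding mat_mul_eq_None_iff using only_k by metis
    then show ?thesis using None by simp
  next
    case (Some a)
    have "(SOME k'. A i k' \<noteq> None \<and> B k' j \<noteq> None) = k"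
      using only_k b Some by (intro some_equality) auto
    then show ?thesis using b Some unfolding mat_mul_def by auto
  qed
qed

lemma mat_mul_closed:
  assumes G: "monoid G" and A: "A \<in> In_mats G n" and B: "B \<in> In_mats G n"
  shows "mat_mul G A B \<in> In_mats G n"
proof -
  have path: "\<exists>l a b. A i l = Some a \<and> B l j = Some b" if "mat_mul G A B i j \<noteq> None" for i j
    using that by (auto simp: mat_mul_eq_None_iff)
  have "i < n \<and> j < n \<and> the (mat_mul G A B i j) \<in> carrier G"
    if nonzero: "mat_mul G A B i j \<noteq> None" for i j
  proof -
    obtain l a b where ab: "A i l = Some a" "B l j = Some b" using path[OF nonzero] by blast
    then have "mat_mul G A B i j = Some (a \<otimes>\<^bsub>G\<^esub> b)"
      using mat_mul_row_entry[OF A] by simp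
    then show ?thesis
      using In_matsD(1)[OF A ab(1)] In_matsD(1)[OF B ab(2)] monoid.m_closed[OF G] by auto
  qed
  moreover have "j = k" if "mat_mul G A B i j \<noteq> None" "mat_mul G A B i k \<noteq> None" for i j k
    using path[OF that(1)] path[OF that(2)] In_matsD(2)[OF A] In_matsD(2)[OF B]
    by (metis option.distinct(1))
  moreover have "i = k" if "mat_mul G A B i j \<noteq> None" "mat_mul G A B k j \<noteq> None" for i j k
    using path[OF that(1)] path[OF that(2)] In_matsD(3)[OF A] In_matsD(3)[OF B]
    by (metis option.distinct(1))
  ultimately show ?thesis unfolding In_mats_def by blast
qed

lemma mat_mul_assoc:
  assumes G: "monoid G"
    and A: "A \<in> In_mats G n" and B: "B \<in> In_mats G n" and C: "C \<in> In_mats G n"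
  shows "mat_mul G (mat_mul G A B) C = mat_mul G A (mat_mul G B C)"
proof (intro ext)
  fix i j
  show "mat_mul G (mat_mul G A B) C i j = mat_mul G A (mat_mul G B C) i j"
  proof (cases "\<exists>k l. A i k \<noteq> None \<and> B k l \<noteq> None \<and> C l j \<noteq> None")
    case True
    then obtain k l a b c where abc: "A i k = Some a" "B k l = Some b" "C l j = Some c"
      by auto
    have AB: "mat_mul G A B i l = Some (a \<otimes>\<^bsub>G\<^esub> b)"
      and BC: "mat_mul G B C k j = Some (b \<otimes>\<^bsub>G\<^esub> c)"
      using abc mat_mul_row_entry[OF A] mat_mul_row_entry[OF B] by simp_all
    have "mat_mul G (mat_mul G A B) C i j = Some ((a \<otimes>\<^bsub>G\<^esub> b) \<otimes>\<^bsub>G\<^esub> c)"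
      using abc mat_mul_row_entry[OF mat_mul_closed[OF G A B] AB] by simp
    moreover have "mat_mul G A (mat_mul G B C) i j = Some (a \<otimes>\<^bsub>G\<^esub> (b \<otimes>\<^bsub>G\<^esub> c))"
      using BC mat_mul_row_entry[OF A abc(1)] by simp
    moreover have "a \<in> carrier G" "b \<in> carrier G" "c \<in> carrier G"
      using In_matsD(1)[OF A abc(1)] In_matsD(1)[OF B abc(2)] In_matsD(1)[OF C abc(3)] by auto
    ultimately show ?thesis by (simp add: monoid.m_assoc[OF G])
  next
    case False
    then have "mat_mul G (mat_mul G A B) C i j = None" "mat_mul G A (mat_mul G B C) i j = None"
      unfolding mat_mul_eq_None_iff using False by blast+
    then show ?thesis by simp
  qed
qed

lemma scalar_mat_in_In_mats: "g \<in> carrier G \<Longrightarrow> scalar_mat n g \<in> In_mats G n"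
  unfolding In_mats_def scalar_mat_def by auto

lemma zero_mat_in_In_mats: "zero_mat \<in> In_mats G n"
  unfolding In_mats_def zero_mat_def by auto

lemma mat_mul_zero_left: "mat_mul G zero_mat A = zero_mat"
  by (intro ext) (simp add: mat_mul_eq_None_iff zero_mat_def)

lemma mat_mul_zero_right: "mat_mul G A zero_mat = zero_mat"
  by (intro ext) (simp add: mat_mul_eq_None_iff zero_mat_def)

lemma mat_mul_scalar_left:
  assumes g: "g \<in> carrier G" and A: "A \<in> In_mats G n"
  shows "mat_mul G (scalar_mat n g) A = (\<lambda>i j. map_option (\<lambda>a. g \<otimes>\<^bsub>G\<^esub> a) (A i j))"
proof (intro ext)
  fix i j
  show "mat_mul G (scalar_mat n g) A i j = map_option (\<lambda>a. g \<otimes>\<^bsub>G\<^esub> a) (A i j)"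
  proof (cases "i < n")
    case True
    then have "scalar_mat n g i i = Some g" by (simp add: scalar_mat_def)
    then show ?thesis using mat_mul_row_entry[OF scalar_mat_in_In_mats[OF g]] by simp
  next
    case False
    then have "A i j = None" using In_matsD(1)[OF A] by (metis not_None_eq)
    with False show ?thesis by (simp add: mat_mul_eq_None_iff scalar_mat_def)
  qed
qed

lemma mat_mul_scalar_right:
  assumes g: "g \<in> carrier G" and A: "A \<in> In_mats G n"
  shows "mat_mul G A (scalar_mat n g) = (\<lambda>i j. map_option (\<lambda>a. a \<otimes>\<^bsub>G\<^esub> g) (A i j))"
proof (intro ext)
  fix i j
  show "mat_mul G A (scalar_mat n g) i j = map_option (\<lambda>a. a \<otimes>\<^bsub>G\<^esub> g) (A i j)"
  proof (cases "j < n")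
    case True
    then have "scalar_mat n g j j = Some g" by (simp add: scalar_mat_def)
    then show ?thesis using mat_mul_col_entry[OF scalar_mat_in_In_mats[OF g]] by simp
  next
    case False
    then have "A i j = None" using In_matsD(1)[OF A] by (metis not_None_eq)
    with False show ?thesis by (simp add: mat_mul_eq_None_iff scalar_mat_def)
  qed
qed

lemma finite_In_mats:
  assumes fin: "finite (carrier G)"
  shows "finite (In_mats G n)"
proof -
  let ?V = "insert None (Some ` carrier G)"
  let ?rows = "{f. \<forall>j. (j \<in> {..<n} \<longrightarrow> f j \<in> ?V) \<and> (j \<notin> {..<n} \<longrightarrow> f j = None)}"
  have "finite ?rows"
    using fin by (intro finite_set_of_finite_funs) auto
  let ?mats = "{A. \<forall>i. (i \<in> {..<n} \<longrightarrow> A i \<in> ?rows) \<and> (i \<notin> {..<n} \<longrightarrow> A i = (\<lambda>_. None))}"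
  from \<open>finite ?rows\<close> have "finite ?mats"
    by (rule finite_set_of_finite_funs[OF finite_lessThan])
  moreover have "In_mats G n \<subseteq> ?mats"
  proof
    fix A assume A: "A \<in> In_mats G n"
    have "A i j = None \<or> (\<exists>a \<in> carrier G. A i j = Some a) \<and> i < n \<and> j < n" for i j
      using In_matsD(1)[OF A, of i j] by (cases "A i j") auto
    then show "A \<in> ?mats" by (auto simp: fun_eq_iff)
  qed
  ultimately show ?thesis by (rule finite_subset[rotated])
qed

definition mat_rank :: "'g gmat \<Rightarrow> nat" where
  "mat_rank A = card {(i, j). A i j \<noteq> None}"

lemma finite_nonzero_entries: "A \<in> In_mats G n \<Longrightarrow> finite {(i, j). A i j \<noteq> None}"
  by (rule finite_subset[of _ "{..<n} \<times> {..<n}"]) (auto dest: In_matsD(1))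

lemma mat_rank_mul_le_card_composable:
  assumes A: "A \<in> In_mats G n" and B: "B \<in> In_mats G n"
  shows "mat_rank (mat_mul G A B) \<le> card {(k, j). B k j \<noteq> None \<and> (\<exists>i. A i k \<noteq> None)}"
    and "mat_rank (mat_mul G A B) \<le> card {(i, k). A i k \<noteq> None \<and> (\<exists>j. B k j \<noteq> None)}"
proof -
  (* The paths i -> k -> j through nonzero entries project injectively onto the entries of
     either factor. *)
  define P where "P = {(i, k, j). A i k \<noteq> None \<and> B k j \<noteq> None}"
  have "P \<subseteq> {..<n} \<times> {..<n} \<times> {..<n}"
    unfolding P_def by (auto dest: In_matsD(1)[OF A] In_matsD(1)[OF B])
  then have "finite P" by (rule finite_subset) simp
  have "{(i, j). mat_mul G A B i j \<noteq> None} = (\<lambda>(i, k, j). (i, j)) ` P"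
    unfolding P_def mat_mul_eq_None_iff by force
  then have rank_le: "mat_rank (mat_mul G A B) \<le> card P"
    unfolding mat_rank_def using card_image_le[OF \<open>finite P\<close>] by simp
  have "inj_on (\<lambda>(i, k, j). (k, j)) P"
  proof (rule inj_onI, clarsimp)
    fix i k j i' assume "(i, k, j) \<in> P" "(i', k, j) \<in> P"
    then show "i = i'" unfolding P_def using In_matsD(3)[OF A, of i k i'] by simp
  qed
  then have "card P = card ((\<lambda>(i, k, j). (k, j)) ` P)"
    by (simp add: card_image)
  also have "(\<lambda>(i, k, j). (k, j)) ` P = {(k, j). B k j \<noteq> None \<and> (\<exists>i. A i k \<noteq> None)}"
    unfolding P_def by force
  finally show "mat_rank (mat_mul G A B) \<le> card {(k, j). B k j \<noteq> None \<and> (\<exists>i. A i k \<noteq> None)}"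
    using rank_le by simp
  have "inj_on (\<lambda>(i, k, j). (i, k)) P"
  proof (rule inj_onI, clarsimp)
    fix i k j j' assume "(i, k, j) \<in> P" "(i, k, j') \<in> P"
    then show "j = j'" unfolding P_def using In_matsD(2)[OF B, of k j j'] by simp
  qed
  then have "card P = card ((\<lambda>(i, k, j). (i, k)) ` P)"
    by (simp add: card_image)
  also have "(\<lambda>(i, k, j). (i, k)) ` P = {(i, k). A i k \<noteq> None \<and> (\<exists>j. B k j \<noteq> None)}"
    unfolding P_def by force
  finally show "mat_rank (mat_mul G A B) \<le> card {(i, k). A i k \<noteq> None \<and> (\<exists>j. B k j \<noteq> None)}"
    using rank_le by simp
qed

lemma mat_rank_mul_le_right:
  assumes A: "A \<in> In_mats G n" and B: "B \<in> In_mats G n"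
  shows "mat_rank (mat_mul G A B) \<le> mat_rank B"
proof -
  have "{(k, j). B k j \<noteq> None \<and> (\<exists>i. A i k \<noteq> None)} \<subseteq> {(k, j). B k j \<noteq> None}"
    by auto
  from card_mono[OF finite_nonzero_entries[OF B] this] show ?thesis
    using mat_rank_mul_le_card_composable(1)[OF A B] unfolding mat_rank_def by linarith
qed

lemma mat_rank_mul_le_left:
  assumes A: "A \<in> In_mats G n" and B: "B \<in> In_mats G n"
  shows "mat_rank (mat_mul G A B) \<le> mat_rank A"
proof -
  have "{(i, k). A i k \<noteq> None \<and> (\<exists>j. B k j \<noteq> None)} \<subseteq> {(i, k). A i k \<noteq> None}"
    by auto
  from card_mono[OF finite_nonzero_entries[OF A] this] show ?thesis
    using mat_rank_mul_le_card_composable(2)[OF A B] unfolding mat_rank_def by linarith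
qed

lemma mat_rank_mul_eq_rightD:
  assumes A: "A \<in> In_mats G n" and B: "B \<in> In_mats G n"
    and rank: "mat_rank (mat_mul G A B) = mat_rank B" and k: "B k j \<noteq> None"
  shows "\<exists>i. A i k \<noteq> None"
proof -
  let ?S = "{(k, j). B k j \<noteq> None \<and> (\<exists>i. A i k \<noteq> None)}"
  have sub: "?S \<subseteq> {(k, j). B k j \<noteq> None}" by auto
  moreover have "card ?S = card {(k, j). B k j \<noteq> None}"
    using card_mono[OF finite_nonzero_entries[OF B] sub] mat_rank_mul_le_card_composable(1)[OF A B] rank
    unfolding mat_rank_def by linarith
  ultimately have "?S = {(k, j). B k j \<noteq> None}"
    by (rule card_subset_eq[OF finite_nonzero_entries[OF B]])
  then show ?thesis using k by blast
qed

lemma mat_rank_mul_eq_leftD: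
  assumes A: "A \<in> In_mats G n" and B: "B \<in> In_mats G n"
    and rank: "mat_rank (mat_mul G A B) = mat_rank A" and k: "A i k \<noteq> None"
  shows "\<exists>j. B k j \<noteq> None"
proof -
  let ?S = "{(i, k). A i k \<noteq> None \<and> (\<exists>j. B k j \<noteq> None)}"
  have sub: "?S \<subseteq> {(i, k). A i k \<noteq> None}" by auto
  moreover have "card ?S = card {(i, k). A i k \<noteq> None}"
    using card_mono[OF finite_nonzero_entries[OF A] sub] mat_rank_mul_le_card_composable(2)[OF A B] rank
    unfolding mat_rank_def by linarith
  ultimately have "?S = {(i, k). A i k \<noteq> None}"
    by (rule card_subset_eq[OF finite_nonzero_entries[OF A]])
  then show ?thesis using k by blast
qed

lemma mat_rank_preserving_left_cancel:
  assumes G: "group G" and m: "m \<in> In_mats G n"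
    and v1: "v1 \<in> In_mats G n" and v2: "v2 \<in> In_mats G n"
    and rank1: "mat_rank (mat_mul G m v1) = mat_rank v1"
    and rank2: "mat_rank (mat_mul G m v2) = mat_rank v2"
    and eq: "mat_mul G m v1 = mat_mul G m v2"
  shows "v1 = v2"
proof (intro ext)
  interpret group G by (rule G)
  fix k j
  show "v1 k j = v2 k j"
  proof (cases "v1 k j = None \<and> v2 k j = None")
    case False
    then obtain i c where c: "m i k = Some c"
      using mat_rank_mul_eq_rightD[OF m v1 rank1] mat_rank_mul_eq_rightD[OF m v2 rank2] by blast
    have "map_option (\<lambda>b. c \<otimes>\<^bsub>G\<^esub> b) (v1 k j) = map_option (\<lambda>b. c \<otimes>\<^bsub>G\<^esub> b) (v2 k j)"
      using mat_mul_row_entry[OF m c] eq by metis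
    moreover have "c \<in> carrier G" using In_matsD(1)[OF m c] by simp
    moreover have "a \<in> carrier G" if "v1 k j = Some a \<or> v2 k j = Some a" for a
      using that In_matsD(1)[OF v1] In_matsD(1)[OF v2] by blast
    ultimately show ?thesis by (cases "v1 k j"; cases "v2 k j") auto
  qed simp
qed

lemma mat_rank_preserving_right_cancel:
  assumes G: "group G" and m: "m \<in> In_mats G n"
    and v1: "v1 \<in> In_mats G n" and v2: "v2 \<in> In_mats G n"
    and rank1: "mat_rank (mat_mul G v1 m) = mat_rank v1"
    and rank2: "mat_rank (mat_mul G v2 m) = mat_rank v2"
    and eq: "mat_mul G v1 m = mat_mul G v2 m"
  shows "v1 = v2"
proof (intro ext)
  interpret group G by (rule G)
  fix i k
  show "v1 i k = v2 i k"
  proof (cases "v1 i k = None \<and> v2 i k = None")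
    case False
    then obtain j c where c: "m k j = Some c"
      using mat_rank_mul_eq_leftD[OF v1 m rank1] mat_rank_mul_eq_leftD[OF v2 m rank2] by blast
    have "map_option (\<lambda>a. a \<otimes>\<^bsub>G\<^esub> c) (v1 i k) = map_option (\<lambda>a. a \<otimes>\<^bsub>G\<^esub> c) (v2 i k)"
      using mat_mul_col_entry[OF m c] eq by metis
    moreover have "c \<in> carrier G" using In_matsD(1)[OF m c] by simp
    moreover have "a \<in> carrier G" if "v1 i k = Some a \<or> v2 i k = Some a" for a
      using that In_matsD(1)[OF v1] In_matsD(1)[OF v2] by blast
    ultimately show ?thesis by (cases "v1 i k"; cases "v2 i k") auto
  qed simp
qed

lemma In_mats_rank_cancellative_monoid:
  fixes G :: "('g, 'b) monoid_scheme" (structure)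
  assumes G: "comm_group G" and fin: "finite (carrier G)"
  shows "rank_cancellative_monoid G (In_mats G n) (mat_mul G) zero_mat (scalar_mat n) mat_rank"
proof -
  interpret comm_group G by (rule G)
  show ?thesis
  proof unfold_locales
    show "finite (In_mats G n)" using fin by (rule finite_In_mats)
    show "mat_mul G x y \<in> In_mats G n" if "x \<in> In_mats G n" "y \<in> In_mats G n" for x y
      using that by (simp add: mat_mul_closed monoid_axioms)
    show "mat_mul G (mat_mul G x y) w = mat_mul G x (mat_mul G y w)"
      if "x \<in> In_mats G n" "y \<in> In_mats G n" "w \<in> In_mats G n" for x y w
      using that by (simp add: mat_mul_assoc monoid_axioms)
    show "mat_mul G (scalar_mat n \<one>) x = x" if x: "x \<in> In_mats G n" for x
    proof (intro ext)
      fix i j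
      show "mat_mul G (scalar_mat n \<one>) x i j = x i j"
        using In_matsD(1)[OF x, of i j]
        by (cases "x i j") (simp_all add: mat_mul_scalar_left[OF one_closed x])
    qed
    show "scalar_mat n (g \<otimes> h) = mat_mul G (scalar_mat n g) (scalar_mat n h)"
      if "g \<in> carrier G" "h \<in> carrier G" for g h
      using that by (simp add: mat_mul_scalar_left scalar_mat_in_In_mats)
        (simp add: scalar_mat_def fun_eq_iff)
    show "mat_mul G (scalar_mat n g) x = mat_mul G x (scalar_mat n g)"
      if g: "g \<in> carrier G" and x: "x \<in> In_mats G n" for g x
      using In_matsD(1)[OF x] g
      by (auto simp: mat_mul_scalar_left[OF g x] mat_mul_scalar_right[OF g x] fun_eq_iff m_comm
          intro!: option.map_cong)
    show "g = \<one>" if g: "g \<in> carrier G" and x: "x \<in> In_mats G n" and "x \<noteq> zero_mat"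
      and fixed: "mat_mul G (scalar_mat n g) x = x" for g x
    proof -
      obtain i j a where a: "x i j = Some a"
        using \<open>x \<noteq> zero_mat\<close> by (auto simp: zero_mat_def fun_eq_iff)
      have "g \<otimes> a = a"
        using fun_cong[OF fun_cong[OF fixed, of i], of j] a by (simp add: mat_mul_scalar_left[OF g x])
      then show ?thesis using g In_matsD(1)[OF x a] by simp
    qed
  qed (simp_all add: zero_mat_in_In_mats mat_mul_zero_left mat_mul_zero_right scalar_mat_in_In_mats
      mat_rank_mul_le_left mat_rank_mul_le_right mat_rank_preserving_left_cancel[OF is_group]
      mat_rank_preserving_right_cancel[OF is_group])
qed

theorem mainTheorem10:
  fixes G :: "('g, 'b) monoid_scheme" and n :: nat
  assumes "comm_group G" and "finite (carrier G)" and "n \<ge> 1"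
  shows "left_inductive G n \<and> right_inductive G n"
proof -
  interpret rank_cancellative_monoid G "In_mats G n" "mat_mul G" zero_mat "scalar_mat n" mat_rank
    using assms(1,2) by (rule In_mats_rank_cancellative_monoid)
  show ?thesis
    unfolding left_inductive_def right_inductive_def Let_def
    using vect_obj_lact vect_mor_lact vect_obj_ract vect_mor_ract by blast
qed

end
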